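(* Let $G=(V,E)$ be a simple directed acyclic graph with capacities $C\in\mathbb{R}_{\ge0}^E$, $s,t\in V$ with a directed $s$-$t$ path, and budget $\gamma$ with $0<\gamma\le\min_{e\in E}C(e)$. For any interdiction strategy $w$ there exists an interdiction strategy $w'$ which is a probability distribution on the set of single-path flows (in $\mathcal{F}_{\le\gamma}$) such that $\Lambda(w',P)\ge\Lambda(w,P)$ for every set of user paths $P$.
   Context: An $s$-$t$ flow is a vector $\mathbf{f}\in\mathbb{R}^E$ with $0\le\mathbf{f}(e)\le C(e)$ for all $e$ and flow conservation at every $v\in V\setminus\{s,t\}$; its value is $val(\mathbf{f})=\sum_{(s,u)\in E}\mathbf{f}(s,u)$. $\mathcal{F}_{\le\gamma}$ denotes the set of $s$-$t$ flows of value at most $\gamma$. An interdiction strategy is a (finitely supported) probability distribution $w$ on $\mathcal{F}_{\le\gamma}$. A single-path flow is an $s$-$t$ flow whose positive entries all lie on the edges of one directed $s$-$t$ path. A set of user paths is a set $P=\{p_1,\dots,p_k\}$ of directed paths in $G$ (viewed as edge sets, not necessarily disjoint or with common endpoints) with initial flow values $\lambda_i\ge0$ such that $\sum_{i:e\in p_i}\lambda_i\le C(e)$ for all $e$. For an $s$-$t$ flow $\mathbf{f}$, $T(\mathbf{f},P)$ is the optimal value of: maximize $\sum_i\tilde\lambda_i$ s.t. $\sum_{i:e\in p_i}\tilde\lambda_i\le C(e)-\mathbf{f}(e)$ for all $e$, $0\le\tilde\lambda_i\le\lambda_i$. Define $\Lambda(\mathbf{f},P)=\sum_i\lambda_i-T(\mathbf{f},P)$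 and $\Lambda(w,P)=\sum_{\mathbf{f}}w(\mathbf{f})\Lambda(\mathbf{f},P)$. *)

theory Defs
  imports Complex_Main
begin

type_synonym 'v edge = "'v \<times> 'v"
type_synonym 'v flowvec = "'v edge \<Rightarrow> real"

text \<open>Simple directed acyclic graph: finite vertex set V, edge set E \<subseteq> V \<times> V
  (a set of ordered pairs, hence no parallel edges), no loops, no directed cycle.\<close>
definition simple_dag :: "'v set \<Rightarrow> 'v edge set \<Rightarrow> bool" where
  "simple_dag V E \<longleftrightarrow> finite V \<and> E \<subseteq> V \<times> V \<and> (\<forall>v. (v, v) \<notin> E) \<and> (\<forall>v. (v, v) \<notin> E\<^sup>+)"

definition path_edges :: "'v list \<Rightarrow> 'v edge set" where
  "path_edges xs = set (zip xs (tl xs))"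

definition is_dpath :: "'v set \<Rightarrow> 'v edge set \<Rightarrow> 'v list \<Rightarrow> bool" where
  "is_dpath V E xs \<longleftrightarrow> xs \<noteq> [] \<and> distinct xs \<and> set xs \<subseteq> V \<and> path_edges xs \<subseteq> E"

definition is_st_path :: "'v set \<Rightarrow> 'v edge set \<Rightarrow> 'v \<Rightarrow> 'v \<Rightarrow> 'v list \<Rightarrow> bool" where
  "is_st_path V E s t xs \<longleftrightarrow> is_dpath V E xs \<and> hd xs = s \<and> last xs = t"

definition is_st_flow ::
  "'v set \<Rightarrow> 'v edge set \<Rightarrow> ('v edge \<Rightarrow> real) \<Rightarrow> 'v \<Rightarrow> 'v \<Rightarrow> 'v flowvec \<Rightarrow> bool" where
  "is_st_flow V E C s t f \<longleftrightarrow>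
     (\<forall>e. e \<notin> E \<longrightarrow> f e = 0) \<and>
     (\<forall>e\<in>E. 0 \<le> f e \<and> f e \<le> C e) \<and>
     (\<forall>v\<in>V - {s, t}. (\<Sum>e\<in>{e\<in>E. snd e = v}. f e) = (\<Sum>e\<in>{e\<in>E. fst e = v}. f e))"

definition flow_val :: "'v edge set \<Rightarrow> 'v \<Rightarrow> 'v flowvec \<Rightarrow> real" where
  "flow_val E s f = (\<Sum>e\<in>{e\<in>E. fst e = s}. f e)"

definition flows_le ::
  "'v set \<Rightarrow> 'v edge set \<Rightarrow> ('v edge \<Rightarrow> real) \<Rightarrow> 'v \<Rightarrow> 'v \<Rightarrow> real \<Rightarrow> 'v flowvec set" where
  "flows_le V E C s t \<gamma> = {f. is_st_flow V E C s t f \<and> flow_val E s f \<le> \<gamma>}"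

definition single_path_flow ::
  "'v set \<Rightarrow> 'v edge set \<Rightarrow> ('v edge \<Rightarrow> real) \<Rightarrow> 'v \<Rightarrow> 'v \<Rightarrow> 'v flowvec \<Rightarrow> bool" where
  "single_path_flow V E C s t f \<longleftrightarrow> is_st_flow V E C s t f \<and>
     (\<exists>p. is_st_path V E s t p \<and> (\<forall>e. f e > 0 \<longrightarrow> e \<in> path_edges p))"

definition fin_distr_on :: "('a \<Rightarrow> real) \<Rightarrow> 'a set \<Rightarrow> bool" where
  "fin_distr_on w S \<longleftrightarrow> finite {x. w x \<noteq> 0} \<and> (\<forall>x. 0 \<le> w x) \<and>
     {x. w x \<noteq> 0} \<subseteq> S \<and> (\<Sum>x\<in>{x. w x \<noteq> 0}. w x) = 1"

definition interdiction_strategy ::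
  "'v set \<Rightarrow> 'v edge set \<Rightarrow> ('v edge \<Rightarrow> real) \<Rightarrow> 'v \<Rightarrow> 'v \<Rightarrow> real \<Rightarrow> ('v flowvec \<Rightarrow> real) \<Rightarrow> bool" where
  "interdiction_strategy V E C s t \<gamma> w \<longleftrightarrow> fin_distr_on w (flows_le V E C s t \<gamma>)"

definition user_paths ::
  "'v set \<Rightarrow> 'v edge set \<Rightarrow> ('v edge \<Rightarrow> real) \<Rightarrow> nat \<Rightarrow> (nat \<Rightarrow> 'v list) \<Rightarrow> (nat \<Rightarrow> real) \<Rightarrow> bool" where
  "user_paths V E C k p lam \<longleftrightarrow>
     (\<forall>i<k. is_dpath V E (p i) \<and> 0 \<le> lam i) \<and>
     inj_on (\<lambda>i. path_edges (p i)) {..<k} \<and>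
     (\<forall>e\<in>E. (\<Sum>i\<in>{i. i < k \<and> e \<in> path_edges (p i)}. lam i) \<le> C e)"

text \<open>T(f,P): optimal value of the LP maximising the remaining user flow.\<close>
definition T_val ::
  "'v edge set \<Rightarrow> ('v edge \<Rightarrow> real) \<Rightarrow> nat \<Rightarrow> (nat \<Rightarrow> 'v list) \<Rightarrow> (nat \<Rightarrow> real) \<Rightarrow> 'v flowvec \<Rightarrow> real" where
  "T_val E C k p lam f = Sup {(\<Sum>i<k. lt i) | lt.
      (\<forall>e\<in>E. (\<Sum>i\<in>{i. i < k \<and> e \<in> path_edges (p i)}. lt i) \<le> C e - f e) \<and>
      (\<forall>i<k. 0 \<le> lt i \<and> lt i \<le> lam i)}"

definition Lambda_flow ::
  "'v edge set \<Rightarrow> ('v edge \<Rightarrow> real) \<Rightarrow> nat \<Rightarrow> (nat \<Rightarrow> 'v list) \<Rightarrow> (nat \<Rightarrow> real) \<Rightarrow> 'v flowvec \<Rightarrow> real" where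
  "Lambda_flow E C k p lam f = (\<Sum>i<k. lam i) - T_val E C k p lam f"

definition Lambda_strat ::
  "'v edge set \<Rightarrow> ('v edge \<Rightarrow> real) \<Rightarrow> nat \<Rightarrow> (nat \<Rightarrow> 'v list) \<Rightarrow> (nat \<Rightarrow> real) \<Rightarrow> ('v flowvec \<Rightarrow> real) \<Rightarrow> real" where
  "Lambda_strat E C k p lam w = (\<Sum>f\<in>{f. w f \<noteq> 0}. w f * Lambda_flow E C k p lam f)"

end

theory Submission
  imports Defs
begin

text \<open>Because the graph is acyclic, every s-t flow \<open>f\<close> of value \<open>v\<close> decomposes into path flows,
  \<open>f = (\<Sum>q. \<mu> q * \<chi>\<^sub>q)\<close> with \<open>(\<Sum>q. \<mu> q) = v\<close>, so \<open>f\<close> is the convex combination with weights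
  \<open>\<mu> q / v\<close> of the single-path flows \<open>v * \<chi>\<^sub>q\<close>; these have value \<open>v \<le> \<gamma> \<le> min C\<close>, hence are
  admissible. The remaining user flow \<open>T(f, P)\<close> is the value of an LP whose constraints depend
  affinely on \<open>f\<close>, so it is concave in \<open>f\<close> and \<open>\<Lambda>(f, P)\<close> is convex. Replacing every flow in the
  support of \<open>w\<close> by its distribution over single-path flows therefore does not decrease
  \<open>\<Lambda>(w, P)\<close>.\<close>

definition path_indicator :: "'v list \<Rightarrow> 'v flowvec" where
  "path_indicator xs e = of_bool (e \<in> path_edges xs)"

definition inflow :: "'v edge set \<Rightarrow> 'v flowvec \<Rightarrow> 'v \<Rightarrow> real" where
  "inflow E f v = (\<Sum>e\<in>{e\<in>E. snd e = v}. f e)"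

definition outflow :: "'v edge set \<Rightarrow> 'v flowvec \<Rightarrow> 'v \<Rightarrow> real" where
  "outflow E f v = (\<Sum>e\<in>{e\<in>E. fst e = v}. f e)"

lemma flow_val_eq_outflow: "flow_val E s f = outflow E f s"
  by (simp add: flow_val_def outflow_def)

lemma path_edges_Cons:
  "path_edges (x # xs) = (if xs = [] then {} else insert (x, hd xs) (path_edges xs))"
  by (cases xs) (auto simp: path_edges_def)

lemma finite_path_edges [simp]: "finite (path_edges xs)"
  by (simp add: path_edges_def)

lemma path_edges_subset: "path_edges xs \<subseteq> set xs \<times> set xs"
  unfolding path_edges_def by (cases xs) (auto dest: set_zip_leftD set_zip_rightD)

lemma card_path_edges_into:
  "distinct xs \<Longrightarrow>
    card {e\<in>path_edges xs. snd e = v} = (if v \<in> set xs \<and> v \<noteq> hd xs then 1 else 0)"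
proof (induction xs)
  case (Cons x xs)
  show ?case
  proof (cases "xs = []")
    case False
    then have split: "{e\<in>path_edges (x # xs). snd e = v} =
        (if hd xs = v then {(x, v)} else {}) \<union> {e\<in>path_edges xs. snd e = v}"
      by (auto simp: path_edges_Cons)
    show ?thesis
    proof (cases "hd xs = v")
      case True
      then have "card {e\<in>path_edges xs. snd e = v} = 0"
        using Cons by simp
      then have "{e\<in>path_edges xs. snd e = v} = {}"
        by simp
      then have "{e\<in>path_edges (x # xs). snd e = v} = {(x, v)}"
        using split True by auto
      moreover have "v \<in> set (x # xs)" "v \<noteq> hd (x # xs)"
        using True False Cons.prems by auto
      ultimately show ?thesis by simp
    qed (use split Cons in auto)
  qed (simp add: path_edges_def)
qed (simp add: path_edges_def)

lemma card_path_edges_out_of: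
  "distinct xs \<Longrightarrow>
    card {e\<in>path_edges xs. fst e = v} = (if v \<in> set xs \<and> v \<noteq> last xs then 1 else 0)"
proof (induction xs)
  case (Cons x xs)
  show ?case
  proof (cases "xs = []")
    case False
    then have split: "{e\<in>path_edges (x # xs). fst e = v} =
        (if x = v then {(x, hd xs)} else {}) \<union> {e\<in>path_edges xs. fst e = v}"
      by (auto simp: path_edges_Cons)
    show ?thesis
    proof (cases "x = v")
      case True
      then have "{e\<in>path_edges xs. fst e = v} = {}"
        using path_edges_subset[of xs] Cons.prems by auto
      then have "{e\<in>path_edges (x # xs). fst e = v} = {(x, hd xs)}"
        using split True by auto
      moreover have "v \<in> set (x # xs)" "v \<noteq> last (x # xs)"
        using True False Cons.prems by auto
      ultimately show ?thesis by simp
    qed (use split Cons False in auto)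
  qed (simp add: path_edges_def)
qed (simp add: path_edges_def)

lemma inflow_path_indicator:
  assumes "finite E" "path_edges p \<subseteq> E" "distinct p"
  shows "inflow E (path_indicator p) v = (if v \<in> set p \<and> v \<noteq> hd p then 1 else 0)"
proof -
  have "{e\<in>E. snd e = v} \<inter> {e. e \<in> path_edges p} = {e\<in>path_edges p. snd e = v}"
    using assms(2) by auto
  then show ?thesis
    using assms card_path_edges_into[of p v]
    by (simp add: inflow_def path_indicator_def)
qed

lemma outflow_path_indicator:
  assumes "finite E" "path_edges p \<subseteq> E" "distinct p"
  shows "outflow E (path_indicator p) v = (if v \<in> set p \<and> v \<noteq> last p then 1 else 0)"
proof -
  have "{e\<in>E. fst e = v} \<inter> {e. e \<in> path_edges p} = {e\<in>path_edges p. fst e = v}"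
    using assms(2) by auto
  then show ?thesis
    using assms card_path_edges_out_of[of p v]
    by (simp add: outflow_def path_indicator_def)
qed

lemma path_indicator_conserved:
  assumes "finite E" "is_st_path V E s t p" "v \<noteq> s" "v \<noteq> t"
  shows "inflow E (path_indicator p) v = outflow E (path_indicator p) v"
proof -
  have "path_edges p \<subseteq> E" "distinct p" "hd p = s" "last p = t"
    using assms(2) by (auto simp: is_st_path_def is_dpath_def)
  then show ?thesis
    using assms inflow_path_indicator[of E p v] outflow_path_indicator[of E p v] by simp
qed

lemma outflow_path_indicator_source:
  assumes "finite E" "is_st_path V E s t p" "s \<noteq> t"
  shows "outflow E (path_indicator p) s = 1"
proof -
  have "path_edges p \<subseteq> E" "distinct p" "hd p = s" "last p = t" "p \<noteq> []"
    using assms(2) by (auto simp: is_st_path_def is_dpath_def)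
  then show ?thesis
    using assms outflow_path_indicator[of E p s] hd_in_set[of p] by simp
qed

lemma inflow_minus_path_indicator:
  "inflow E (\<lambda>e. f e - m * path_indicator p e) v = inflow E f v - m * inflow E (path_indicator p) v"
  by (simp add: inflow_def sum_subtractf sum_distrib_left)

lemma outflow_minus_path_indicator:
  "outflow E (\<lambda>e. f e - m * path_indicator p e) v = outflow E f v - m * outflow E (path_indicator p) v"
  by (simp add: outflow_def sum_subtractf sum_distrib_left)

lemma path_edges_rtrancl:
  "xs \<noteq> [] \<Longrightarrow> path_edges xs \<subseteq> R \<Longrightarrow> y \<in> set xs \<Longrightarrow> (hd xs, y) \<in> R\<^sup>*"
proof (induction xs)
  case (Cons x xs)
  then show ?case
    by (cases "xs = []") (auto simp: path_edges_Cons intro: converse_rtrancl_into_rtrancl)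
qed simp

lemma rtrancl_imp_dpath:
  assumes "(x, y) \<in> R\<^sup>*" "R \<subseteq> E" "E \<subseteq> V \<times> V" "y \<in> V" "acyclic R"
  shows "\<exists>ys. is_dpath V E ys \<and> hd ys = x \<and> last ys = y \<and> path_edges ys \<subseteq> R"
  using assms(1)
proof (induction rule: converse_rtrancl_induct)
  case base
  show ?case
    using assms by (intro exI[of _ "[y]"]) (auto simp: is_dpath_def path_edges_def)
next
  case (step u v)
  then obtain ys where ys: "is_dpath V E ys" "hd ys = v" "last ys = y" "path_edges ys \<subseteq> R"
    by blast
  have "u \<notin> set ys"
  proof
    assume "u \<in> set ys"
    then have "(v, u) \<in> R\<^sup>*"
      using path_edges_rtrancl[of ys R u] ys by (auto simp: is_dpath_def)
    then have "(u, u) \<in> R\<^sup>+"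
      using step(1) by auto
    then show False
      using assms(5) by (simp add: acyclic_def)
  qed
  then show ?case
    using ys step(1) assms(2,3)
    by (intro exI[of _ "u # ys"]) (auto simp: is_dpath_def path_edges_Cons)
qed

definition nonneg_st_flow :: "'v set \<Rightarrow> 'v edge set \<Rightarrow> 'v \<Rightarrow> 'v \<Rightarrow> 'v flowvec \<Rightarrow> bool" where
  "nonneg_st_flow V E s t f \<longleftrightarrow> (\<forall>e. e \<notin> E \<longrightarrow> f e = 0) \<and> (\<forall>e\<in>E. 0 \<le> f e) \<and>
     (\<forall>v\<in>V - {s, t}. inflow E f v = outflow E f v)"

lemma is_st_flow_imp_nonneg_st_flow: "is_st_flow V E C s t f \<Longrightarrow> nonneg_st_flow V E s t f"
  unfolding is_st_flow_def nonneg_st_flow_def inflow_def outflow_def by blast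

lemma flow_val_flows_le:
  assumes "f \<in> flows_le V E C s t \<gamma>"
  shows "0 \<le> flow_val E s f" and "flow_val E s f \<le> \<gamma>"
  using assms unfolding flows_le_def is_st_flow_def flow_val_def by (auto intro: sum_nonneg)

lemma nonneg_st_flowD:
  assumes "nonneg_st_flow V E s t f"
  shows "e \<notin> E \<Longrightarrow> f e = 0" and "e \<in> E \<Longrightarrow> 0 \<le> f e"
    and "v \<in> V \<Longrightarrow> v \<noteq> s \<Longrightarrow> v \<noteq> t \<Longrightarrow> inflow E f v = outflow E f v"
  using assms unfolding nonneg_st_flow_def by blast+

lemma outflow_nonneg: "\<forall>e\<in>E. 0 \<le> f e \<Longrightarrow> 0 \<le> outflow E f v"
  by (auto simp: outflow_def intro: sum_nonneg)

lemma outflow_pos_iff: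
  assumes "finite E" "\<forall>e\<in>E. 0 \<le> f e"
  shows "0 < outflow E f v \<longleftrightarrow> (\<exists>u. (v, u) \<in> E \<and> 0 < f (v, u))"
proof -
  have "0 \<le> outflow E f v"
    using assms(2) by (rule outflow_nonneg)
  moreover have "outflow E f v = 0 \<longleftrightarrow> (\<forall>e\<in>{e\<in>E. fst e = v}. f e = 0)"
    unfolding outflow_def using assms by (intro sum_nonneg_eq_0_iff) auto
  ultimately show ?thesis
    using assms by (force simp: order_less_le)
qed

lemma inflow_pos_iff:
  assumes "finite E" "\<forall>e\<in>E. 0 \<le> f e"
  shows "0 < inflow E f v \<longleftrightarrow> (\<exists>u. (u, v) \<in> E \<and> 0 < f (u, v))"
proof -
  have "0 \<le> inflow E f v"
    using assms by (auto simp: inflow_def intro: sum_nonneg)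
  moreover have "inflow E f v = 0 \<longleftrightarrow> (\<forall>e\<in>{e\<in>E. snd e = v}. f e = 0)"
    unfolding inflow_def using assms by (intro sum_nonneg_eq_0_iff) auto
  ultimately show ?thesis
    using assms by (force simp: order_less_le)
qed

text \<open>Averaging feasible LP solutions for the flows \<open>G q\<close> gives a feasible solution for \<open>f\<close>.
  The bound \<open>G q \<le> C\<close> keeps each of these LPs feasible, so that its \<open>Sup\<close> is meaningful.\<close>
lemma T_val_concave:
  fixes Q :: "'a set" and c :: "'a \<Rightarrow> real" and G :: "'a \<Rightarrow> 'v flowvec"
  assumes Q: "finite Q" and c0: "\<forall>q\<in>Q. 0 \<le> c q" and c1: "sum c Q = 1"
    and GC: "\<forall>q\<in>Q. \<forall>e\<in>E. G q e \<le> C e"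
    and fG: "\<forall>e\<in>E. f e \<le> (\<Sum>q\<in>Q. c q * G q e)"
    and lam0: "\<forall>i<k. 0 \<le> lam i"
  shows "(\<Sum>q\<in>Q. c q * T_val E C k p lam (G q)) \<le> T_val E C k p lam f"
proof -
  define feasible where "feasible g lt \<longleftrightarrow>
      (\<forall>e\<in>E. (\<Sum>i\<in>{i. i < k \<and> e \<in> path_edges (p i)}. lt i) \<le> C e - g e) \<and>
      (\<forall>i<k. 0 \<le> lt i \<and> lt i \<le> lam i)" for g :: "'v flowvec" and lt :: "nat \<Rightarrow> real"
  define achievable where "achievable g = {(\<Sum>i<k. lt i) | lt. feasible g lt}" for g
  have T: "T_val E C k p lam g = Sup (achievable g)" for g
    unfolding T_val_def achievable_def feasible_def by simp
  have bdd: "bdd_above (achievable g)" for g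
  proof (rule bdd_aboveI)
    fix x assume "x \<in> achievable g"
    then obtain lt where "x = (\<Sum>i<k. lt i)" "feasible g lt"
      unfolding achievable_def by blast
    then show "x \<le> (\<Sum>i<k. lam i)"
      unfolding feasible_def by (auto intro: sum_mono)
  qed
  have nonempty: "achievable (G q) \<noteq> {}" if "q \<in> Q" for q
  proof -
    have "feasible (G q) (\<lambda>_. 0)"
      unfolding feasible_def using GC that lam0 by auto
    then show ?thesis
      unfolding achievable_def by blast
  qed
  show ?thesis
  proof (rule field_le_epsilon)
    fix \<epsilon> :: real assume "0 < \<epsilon>"
    have "\<forall>q\<in>Q. \<exists>lt. feasible (G q) lt \<and> T_val E C k p lam (G q) - \<epsilon> < (\<Sum>i<k. lt i)"
    proof
      fix q assume "q \<in> Q"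
      have "T_val E C k p lam (G q) - \<epsilon> < Sup (achievable (G q))"
        using \<open>0 < \<epsilon>\<close> T by simp
      then obtain x where "x \<in> achievable (G q)" "T_val E C k p lam (G q) - \<epsilon> < x"
        using less_cSupD[OF nonempty[OF \<open>q \<in> Q\<close>]] by blast
      then show "\<exists>lt. feasible (G q) lt \<and> T_val E C k p lam (G q) - \<epsilon> < (\<Sum>i<k. lt i)"
        unfolding achievable_def by blast
    qed
    then obtain L where L: "\<And>q. q \<in> Q \<Longrightarrow> feasible (G q) (L q)"
      "\<And>q. q \<in> Q \<Longrightarrow> T_val E C k p lam (G q) - \<epsilon> < (\<Sum>i<k. L q i)"
      using bchoice by metis
    define lt where "lt i = (\<Sum>q\<in>Q. c q * L q i)" for i
    have "feasible f lt"
      unfolding feasible_def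
    proof (intro conjI ballI allI impI)
      fix e assume "e \<in> E"
      have "(\<Sum>i\<in>{i. i < k \<and> e \<in> path_edges (p i)}. lt i) =
          (\<Sum>q\<in>Q. c q * (\<Sum>i\<in>{i. i < k \<and> e \<in> path_edges (p i)}. L q i))"
        unfolding lt_def by (simp add: sum_distrib_left sum.swap[of _ Q])
      also have "\<dots> \<le> (\<Sum>q\<in>Q. c q * (C e - G q e))"
        using L(1) c0 \<open>e \<in> E\<close> unfolding feasible_def by (intro sum_mono mult_left_mono) auto
      also have "\<dots> = C e - (\<Sum>q\<in>Q. c q * G q e)"
        using c1 by (simp add: right_diff_distrib sum_subtractf sum_distrib_right[symmetric])
      also have "\<dots> \<le> C e - f e"
        using fG \<open>e \<in> E\<close> by simp
      finally show "(\<Sum>i\<in>{i. i < k \<and> e \<in> path_edges (p i)}. lt i) \<le> C e - f e" .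
    next
      fix i assume "i < k"
      show "0 \<le> lt i"
        unfolding lt_def using L(1) c0 \<open>i < k\<close> unfolding feasible_def
        by (intro sum_nonneg mult_nonneg_nonneg) auto
      have "lt i \<le> (\<Sum>q\<in>Q. c q * lam i)"
        unfolding lt_def using L(1) c0 \<open>i < k\<close> unfolding feasible_def
        by (intro sum_mono mult_left_mono) auto
      then show "lt i \<le> lam i"
        using c1 by (simp add: sum_distrib_right[symmetric])
    qed
    then have "(\<Sum>i<k. lt i) \<le> T_val E C k p lam f"
      unfolding T achievable_def using bdd[of f, unfolded achievable_def] by (intro cSup_upper) blast+
    moreover have "(\<Sum>q\<in>Q. c q * T_val E C k p lam (G q)) - \<epsilon> =
        (\<Sum>q\<in>Q. c q * (T_val E C k p lam (G q) - \<epsilon>))"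
      using c1 by (simp add: right_diff_distrib sum_subtractf sum_distrib_right[symmetric])
    moreover have "\<dots> \<le> (\<Sum>q\<in>Q. c q * (\<Sum>i<k. L q i))"
      using L(2) c0 by (intro sum_mono mult_left_mono) (auto intro: less_imp_le)
    moreover have "\<dots> = (\<Sum>i<k. lt i)"
      unfolding lt_def by (simp add: sum_distrib_left sum.swap[of _ Q])
    ultimately show "(\<Sum>q\<in>Q. c q * T_val E C k p lam (G q)) \<le> T_val E C k p lam f + \<epsilon>"
      by linarith
  qed
qed

lemma Lambda_flow_convex:
  fixes Q :: "'a set" and c :: "'a \<Rightarrow> real" and G :: "'a \<Rightarrow> 'v flowvec"
  assumes "finite Q" and "\<forall>q\<in>Q. 0 \<le> c q" and c1: "sum c Q = 1"
    and "\<forall>q\<in>Q. \<forall>e\<in>E. G q e \<le> C e"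
    and "\<forall>e\<in>E. f e \<le> (\<Sum>q\<in>Q. c q * G q e)"
    and "\<forall>i<k. 0 \<le> lam i"
  shows "Lambda_flow E C k p lam f \<le> (\<Sum>q\<in>Q. c q * Lambda_flow E C k p lam (G q))"
proof -
  have "(\<Sum>q\<in>Q. c q * Lambda_flow E C k p lam (G q)) =
      (\<Sum>i<k. lam i) - (\<Sum>q\<in>Q. c q * T_val E C k p lam (G q))"
    unfolding Lambda_flow_def using c1
    by (simp add: right_diff_distrib sum_subtractf sum_distrib_right[symmetric])
  then show ?thesis
    using T_val_concave[OF assms] unfolding Lambda_flow_def by simp
qed

lemma fin_distr_on_pushforward:
  fixes a :: "'i \<Rightarrow> real" and G :: "'i \<Rightarrow> 'b"
  assumes I: "finite I" and a0: "\<forall>i\<in>I. 0 \<le> a i" and a1: "sum a I = 1" and G: "G ` I \<subseteq> S"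
  defines "d \<equiv> \<lambda>g. \<Sum>i\<in>{i\<in>I. G i = g}. a i"
  shows "fin_distr_on d S"
    and "(\<Sum>g\<in>{g. d g \<noteq> 0}. d g * h g) = (\<Sum>i\<in>I. a i * h (G i))"
proof -
  have support: "{g. d g \<noteq> 0} \<subseteq> G ` I"
  proof
    fix g assume "g \<in> {g. d g \<noteq> 0}"
    then have "{i\<in>I. G i = g} \<noteq> {}"
      unfolding d_def by force
    then show "g \<in> G ` I"
      by blast
  qed
  have expectation: "(\<Sum>g\<in>{g. d g \<noteq> 0}. d g * h g) = (\<Sum>i\<in>I. a i * h (G i))" for h
  proof -
    have "(\<Sum>i\<in>I. a i * h (G i)) = (\<Sum>g\<in>G ` I. \<Sum>i\<in>{i\<in>I. G i = g}. a i * h (G i))"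
      using sum.image_gen[OF I, of "\<lambda>i. a i * h (G i)" G] by simp
    also have "\<dots> = (\<Sum>g\<in>G ` I. d g * h g)"
      unfolding d_def by (intro sum.cong refl) (simp add: sum_distrib_right)
    also have "\<dots> = (\<Sum>g\<in>{g. d g \<noteq> 0}. d g * h g)"
      using support I by (intro sum.mono_neutral_right) auto
    finally show ?thesis by simp
  qed
  then show "(\<Sum>g\<in>{g. d g \<noteq> 0}. d g * h g) = (\<Sum>i\<in>I. a i * h (G i))" .
  show "fin_distr_on d S"
    unfolding fin_distr_on_def
  proof (intro conjI allI)
    show "finite {g. d g \<noteq> 0}"
      using finite_subset[OF support finite_imageI[OF I]] .
    show "0 \<le> d g" for g
      unfolding d_def using a0 by (auto intro: sum_nonneg)
    show "{g. d g \<noteq> 0} \<subseteq> S"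
      using support G by blast
    show "(\<Sum>g\<in>{g. d g \<noteq> 0}. d g) = 1"
      using expectation[of "\<lambda>_. 1"] a1 by simp
  qed
qed

lemma fin_distr_on_mixture:
  fixes w :: "'a \<Rightarrow> real" and c :: "'a \<Rightarrow> 'i \<Rightarrow> real" and G :: "'a \<Rightarrow> 'i \<Rightarrow> 'b"
  assumes w: "fin_distr_on w A" and Q: "finite Q"
    and c0: "\<And>f q. f \<in> A \<Longrightarrow> q \<in> Q \<Longrightarrow> 0 \<le> c f q" and c1: "\<And>f. f \<in> A \<Longrightarrow> sum (c f) Q = 1"
    and G: "\<And>f q. f \<in> A \<Longrightarrow> q \<in> Q \<Longrightarrow> G f q \<in> S"
  obtains d where "fin_distr_on d S"
    and "\<And>h. (\<Sum>g\<in>{g. d g \<noteq> 0}. d g * h g) =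
      (\<Sum>f\<in>{f. w f \<noteq> 0}. w f * (\<Sum>q\<in>Q. c f q * h (G f q)))"
proof -
  define W where "W = {f. w f \<noteq> 0}"
  have W: "finite W" "W \<subseteq> A" "\<forall>f. 0 \<le> w f" "sum w W = 1"
    using w unfolding fin_distr_on_def W_def by auto
  define a where "a = (\<lambda>(f, q). w f * c f q)"
  have expectation: "(\<Sum>i\<in>W \<times> Q. a i * h (case_prod G i)) =
      (\<Sum>f\<in>W. w f * (\<Sum>q\<in>Q. c f q * h (G f q)))" for h
  proof -
    have "(\<Sum>i\<in>W \<times> Q. a i * h (case_prod G i)) = (\<Sum>(f, q)\<in>W \<times> Q. w f * (c f q * h (G f q)))"
      by (intro sum.cong) (auto simp: a_def)
    also have "\<dots> = (\<Sum>f\<in>W. \<Sum>q\<in>Q. w f * (c f q * h (G f q)))"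
      by (rule sum.cartesian_product[symmetric])
    finally show ?thesis
      by (simp add: sum_distrib_left)
  qed
  have "(\<Sum>f\<in>W. w f * sum (c f) Q) = sum w W"
    using W(2) c1 by (intro sum.cong) auto
  then have "sum a (W \<times> Q) = 1"
    using expectation[of "\<lambda>_. 1"] W(4) by simp
  moreover have "\<forall>i\<in>W \<times> Q. 0 \<le> a i"
    using W c0 by (auto simp: a_def)
  moreover have "case_prod G ` (W \<times> Q) \<subseteq> S"
    using W G by auto
  ultimately have "fin_distr_on (\<lambda>g. \<Sum>i\<in>{i\<in>W \<times> Q. case_prod G i = g}. a i) S"
    and "(\<Sum>g\<in>{g. (\<Sum>i\<in>{i\<in>W \<times> Q. case_prod G i = g}. a i) \<noteq> 0}.
          (\<Sum>i\<in>{i\<in>W \<times> Q. case_prod G i = g}. a i) * h g) =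
        (\<Sum>f\<in>W. w f * (\<Sum>q\<in>Q. c f q * h (G f q)))" for h
    using fin_distr_on_pushforward[of "W \<times> Q" a "case_prod G" S] W(1) Q expectation by simp_all
  then show thesis
    unfolding W_def by (rule that)
qed

locale st_dag =
  fixes V :: "'v set" and E :: "'v edge set" and s t :: 'v
  assumes simple_dag: "simple_dag V E" and s_ne_t: "s \<noteq> t"
    and st_path_exists: "\<exists>p. is_st_path V E s t p"
begin

lemma finite_V: "finite V" and E_subset: "E \<subseteq> V \<times> V" and acyclic_E: "acyclic E"
  using simple_dag unfolding simple_dag_def acyclic_def by auto

lemma finite_E: "finite E"
  using finite_V E_subset by (meson finite_SigmaI finite_subset)

lemma t_in_V: "t \<in> V" and st_rtrancl: "(s, t) \<in> E\<^sup>*"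
proof -
  obtain p where "p \<noteq> []" "set p \<subseteq> V" "path_edges p \<subseteq> E" "hd p = s" "last p = t"
    using st_path_exists unfolding is_st_path_def is_dpath_def by blast
  then show "t \<in> V" "(s, t) \<in> E\<^sup>*"
    using path_edges_rtrancl[of p E t] last_in_set by auto
qed

abbreviation positive_edges :: "'v flowvec \<Rightarrow> 'v edge set" where
  "positive_edges f \<equiv> {e\<in>E. 0 < f e}"

lemma acyclic_positive_edges: "acyclic (positive_edges f)"
  using acyclic_E by (rule acyclic_subset) auto

lemma finite_positive_edges: "finite (positive_edges f)"
  using finite_E by simp

lemma terminal_if_unbalanced:
  assumes f: "nonneg_st_flow V E s t f" and v: "v \<in> V"
    and unbalanced: "(\<exists>u. (v, u) \<in> positive_edges f) \<noteq> (\<exists>u. (u, v) \<in> positive_edges f)"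
  shows "v \<in> {s, t}"
proof (rule ccontr)
  assume "v \<notin> {s, t}"
  have nonneg: "\<forall>e\<in>E. 0 \<le> f e"
    using f unfolding nonneg_st_flow_def by blast
  have "(\<exists>u. (v, u) \<in> positive_edges f) \<longleftrightarrow> 0 < outflow E f v"
    using outflow_pos_iff[OF finite_E nonneg] by simp
  also have "\<dots> \<longleftrightarrow> 0 < inflow E f v"
    using f v \<open>v \<notin> {s, t}\<close> unfolding nonneg_st_flow_def by simp
  also have "\<dots> \<longleftrightarrow> (\<exists>u. (u, v) \<in> positive_edges f)"
    using inflow_pos_iff[OF finite_E nonneg] by simp
  finally show False
    using unbalanced by blast
qed

text \<open>Walking backwards along positive edges ends, by acyclicity, at a vertex without
  positive in-edges; it has a positive out-edge, so it is a terminal.\<close>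
lemma positive_edge_reached_from_terminal:
  assumes f: "nonneg_st_flow V E s t f" and ab: "(a, b) \<in> positive_edges f"
  shows "\<exists>y\<in>{s, t}. (y, a) \<in> (positive_edges f)\<^sup>*"
proof -
  let ?R = "positive_edges f"
  have "wf ?R"
    using finite_positive_edges acyclic_positive_edges by (rule finite_acyclic_wf)
  then obtain y where y: "(y, a) \<in> ?R\<^sup>*" and minimal: "\<And>x. (x, y) \<in> ?R \<Longrightarrow> (x, a) \<notin> ?R\<^sup>*"
    using wfE_min[of ?R a "{y. (y, a) \<in> ?R\<^sup>*}"] by auto
  have "\<exists>u. (y, u) \<in> ?R"
    using y ab by (cases rule: converse_rtranclE) auto
  moreover have "\<nexists>u. (u, y) \<in> ?R"
  proof
    assume "\<exists>u. (u, y) \<in> ?R"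
    then obtain u where uy: "(u, y) \<in> ?R" ..
    then have "(u, a) \<in> ?R\<^sup>*"
      using y by (rule converse_rtrancl_into_rtrancl)
    with minimal uy show False by blast
  qed
  moreover have "y \<in> V"
    using calculation(1) E_subset by auto
  ultimately show ?thesis
    using terminal_if_unbalanced[OF f, of y] y by blast
qed

lemma positive_edge_reaches_terminal:
  assumes f: "nonneg_st_flow V E s t f" and ab: "(a, b) \<in> positive_edges f"
  shows "\<exists>x\<in>{s, t}. (b, x) \<in> (positive_edges f)\<^sup>*"
proof -
  let ?R = "positive_edges f"
  have "wf (?R\<inverse>)"
    using finite_positive_edges acyclic_positive_edges by (rule finite_acyclic_wf_converse)
  then obtain x where x: "(b, x) \<in> ?R\<^sup>*" and maximal: "\<And>y. (x, y) \<in> ?R \<Longrightarrow> (b, y) \<notin> ?R\<^sup>*"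
    using wfE_min[of "?R\<inverse>" b "{x. (b, x) \<in> ?R\<^sup>*}"] by auto
  have "\<exists>u. (u, x) \<in> ?R"
    using x ab by (cases rule: rtranclE) auto
  moreover have "\<nexists>u. (x, u) \<in> ?R"
  proof
    assume "\<exists>u. (x, u) \<in> ?R"
    then obtain u where xu: "(x, u) \<in> ?R" ..
    with x have "(b, u) \<in> ?R\<^sup>*"
      by (rule rtrancl_into_rtrancl)
    with maximal xu show False by blast
  qed
  moreover have "x \<in> V"
    using calculation(1) E_subset by auto
  ultimately show ?thesis
    using terminal_if_unbalanced[OF f, of x] x by blast
qed

lemma positive_edge_on_st_walk:
  assumes f: "nonneg_st_flow V E s t f" and ab: "(a, b) \<in> positive_edges f"
  shows "(s, a) \<in> (positive_edges f)\<^sup>*" and "(b, t) \<in> (positive_edges f)\<^sup>*"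
proof -
  let ?R = "positive_edges f"
  obtain y x where y: "y \<in> {s, t}" "(y, a) \<in> ?R\<^sup>*" and x: "x \<in> {s, t}" "(b, x) \<in> ?R\<^sup>*"
    using positive_edge_reached_from_terminal[OF f ab] positive_edge_reaches_terminal[OF f ab]
    by blast
  have "(y, b) \<in> ?R\<^sup>+"
    using y(2) ab by (rule rtrancl_into_trancl1)
  then have yx: "(y, x) \<in> ?R\<^sup>+"
    using x(2) by (rule trancl_rtrancl_trancl)
  then have "y \<noteq> x"
    using acyclic_positive_edges by (auto simp: acyclic_def)
  moreover have "(y, x) \<noteq> (t, s)"
  proof
    assume "(y, x) = (t, s)"
    then have "(t, s) \<in> E\<^sup>+"
      using trancl_mono[OF yx] by auto
    then have "(t, t) \<in> E\<^sup>+"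
      using st_rtrancl by (rule trancl_rtrancl_trancl)
    then show False
      using acyclic_E by (simp add: acyclic_def)
  qed
  ultimately have "y = s" "x = t"
    using x(1) y(1) by auto
  then show "(s, a) \<in> ?R\<^sup>*" "(b, t) \<in> ?R\<^sup>*"
    using x y by auto
qed

lemma flow_eq_0_if_outflow_source_eq_0:
  assumes f: "nonneg_st_flow V E s t f" and "outflow E f s = 0"
  shows "f e = 0"
proof (rule ccontr)
  obtain a b where e: "e = (a, b)" by fastforce
  assume "f e \<noteq> 0"
  with f e have ab: "(a, b) \<in> positive_edges f"
    unfolding nonneg_st_flow_def by force
  have "(s, b) \<in> (positive_edges f)\<^sup>+"
    using positive_edge_on_st_walk(1)[OF f ab] ab by (rule rtrancl_into_trancl1)
  then obtain u where "(s, u) \<in> positive_edges f"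
    by (auto dest: tranclD)
  moreover have "\<forall>e\<in>E. 0 \<le> f e"
    using f unfolding nonneg_st_flow_def by blast
  ultimately have "0 < outflow E f s"
    using outflow_pos_iff[OF finite_E, of f s] by auto
  with \<open>outflow E f s = 0\<close> show False by simp
qed

lemma st_path_in_positive_edges:
  assumes f: "nonneg_st_flow V E s t f" and "0 < outflow E f s"
  shows "\<exists>p. is_st_path V E s t p \<and> path_edges p \<subseteq> positive_edges f"
proof -
  have "\<forall>e\<in>E. 0 \<le> f e"
    using f unfolding nonneg_st_flow_def by blast
  then obtain u where su: "(s, u) \<in> positive_edges f"
    using assms(2) outflow_pos_iff[OF finite_E, of f s] by auto
  then have "(s, t) \<in> (positive_edges f)\<^sup>*"
    using positive_edge_on_st_walk(2)[OF f su] by (rule converse_rtrancl_into_rtrancl)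
  then show ?thesis
    using rtrancl_imp_dpath[OF _ _ E_subset t_in_V acyclic_positive_edges]
    unfolding is_st_path_def by blast
qed


definition st_paths :: "'v list set" where
  "st_paths = {p. is_st_path V E s t p}"

lemma finite_st_paths: "finite st_paths"
proof -
  have "st_paths \<subseteq> {xs. set xs \<subseteq> V \<and> length xs \<le> card V}"
  proof
    fix xs assume "xs \<in> st_paths"
    then have "distinct xs" "set xs \<subseteq> V"
      unfolding st_paths_def is_st_path_def is_dpath_def by auto
    then show "xs \<in> {xs. set xs \<subseteq> V \<and> length xs \<le> card V}"
      using distinct_card[of xs] card_mono[OF finite_V, of "set xs"] by auto
  qed
  then show ?thesis
    using finite_lists_length_le[OF finite_V] finite_subset by blast
qed

lemma path_edges_st_path_nonempty:
  assumes "is_st_path V E s t p"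
  shows "path_edges p \<noteq> {}"
proof (cases p)
  case (Cons x xs)
  with assms s_ne_t have "xs \<noteq> []"
    by (auto simp: is_st_path_def)
  with Cons show ?thesis
    by (simp add: path_edges_Cons)
qed (use assms in \<open>simp add: is_st_path_def is_dpath_def\<close>)

lemma nonneg_st_flow_minus_path:
  assumes f: "nonneg_st_flow V E s t f" and p: "is_st_path V E s t p"
    and le: "\<forall>e\<in>path_edges p. m \<le> f e"
  shows "nonneg_st_flow V E s t (\<lambda>e. f e - m * path_indicator p e)"
  unfolding nonneg_st_flow_def
proof (intro conjI allI impI ballI)
  have "path_edges p \<subseteq> E"
    using p by (simp add: is_st_path_def is_dpath_def)
  then show "f e - m * path_indicator p e = 0" if "e \<notin> E" for e
    using nonneg_st_flowD(1)[OF f that] that by (auto simp: path_indicator_def)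
  show "0 \<le> f e - m * path_indicator p e" if "e \<in> E" for e
    using nonneg_st_flowD(2)[OF f that] le
    by (cases "e \<in> path_edges p") (auto simp: path_indicator_def)
  show "inflow E (\<lambda>e. f e - m * path_indicator p e) v = outflow E (\<lambda>e. f e - m * path_indicator p e) v"
    if "v \<in> V - {s, t}" for v
    using nonneg_st_flowD(3)[OF f, of v] that path_indicator_conserved[OF finite_E p, of v]
    by (simp add: inflow_minus_path_indicator outflow_minus_path_indicator)
qed

text \<open>Subtracting the bottleneck value of a positive s-t path zeroes at least one edge.\<close>
lemma peel_st_path:
  assumes f: "nonneg_st_flow V E s t f" and pos: "0 < outflow E f s"
  obtains p m where "p \<in> st_paths" "0 < m"
    and "nonneg_st_flow V E s t (\<lambda>e. f e - m * path_indicator p e)"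
    and "card {e\<in>E. f e - m * path_indicator p e \<noteq> 0} < card {e\<in>E. f e \<noteq> 0}"
    and "outflow E (\<lambda>e. f e - m * path_indicator p e) s = outflow E f s - m"
proof -
  obtain p where p: "is_st_path V E s t p" and positive: "path_edges p \<subseteq> positive_edges f"
    using st_path_in_positive_edges[OF f pos] by blast
  define m where "m = Min (f ` path_edges p)"
  let ?g = "\<lambda>e. f e - m * path_indicator p e"
  have le: "\<forall>e\<in>path_edges p. m \<le> f e"
    unfolding m_def by simp
  have "m \<in> f ` path_edges p"
    unfolding m_def using path_edges_st_path_nonempty[OF p] by (intro Min_in) auto
  then obtain e0 where e0: "e0 \<in> path_edges p" "f e0 = m"
    by blast
  then have "0 < m" "e0 \<in> E"
    using positive by auto
  have "{e\<in>E. ?g e \<noteq> 0} \<subset> {e\<in>E. f e \<noteq> 0}"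
  proof
    show "{e\<in>E. ?g e \<noteq> 0} \<subseteq> {e\<in>E. f e \<noteq> 0}"
      using positive by (auto simp: path_indicator_def)
    have "e0 \<in> {e\<in>E. f e \<noteq> 0}" "e0 \<notin> {e\<in>E. ?g e \<noteq> 0}"
      using e0 \<open>e0 \<in> E\<close> \<open>0 < m\<close> by (simp_all add: path_indicator_def)
    then show "{e\<in>E. ?g e \<noteq> 0} \<noteq> {e\<in>E. f e \<noteq> 0}"
      by blast
  qed
  then have "card {e\<in>E. ?g e \<noteq> 0} < card {e\<in>E. f e \<noteq> 0}"
    using finite_E by (intro psubset_card_mono) auto
  moreover have "outflow E ?g s = outflow E f s - m"
    using outflow_path_indicator_source[OF finite_E p s_ne_t]
    by (simp add: outflow_minus_path_indicator)
  moreover have "p \<in> st_paths"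
    using p by (simp add: st_paths_def)
  ultimately show thesis
    using \<open>0 < m\<close> nonneg_st_flow_minus_path[OF f p le] by (intro that)
qed

lemma path_decomposition:
  "nonneg_st_flow V E s t f \<Longrightarrow> \<exists>\<mu>. (\<forall>q. 0 \<le> \<mu> q) \<and>
     (\<forall>e. f e = (\<Sum>q\<in>st_paths. \<mu> q * path_indicator q e)) \<and> sum \<mu> st_paths = outflow E f s"
proof (induction "card {e\<in>E. f e \<noteq> 0}" arbitrary: f rule: less_induct)
  case less
  show ?case
  proof (cases "outflow E f s = 0")
    case True
    then show ?thesis
      using flow_eq_0_if_outflow_source_eq_0[OF less.prems] by (intro exI[of _ "\<lambda>_. 0"]) simp
  next
    case False
    then have "0 < outflow E f s"
      using less.prems outflow_nonneg[of E f s] by (simp add: nonneg_st_flow_def)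
    then obtain p m where p: "p \<in> st_paths" and "0 < m"
      and g: "nonneg_st_flow V E s t (\<lambda>e. f e - m * path_indicator p e)"
      and smaller: "card {e\<in>E. f e - m * path_indicator p e \<noteq> 0} < card {e\<in>E. f e \<noteq> 0}"
      and val: "outflow E (\<lambda>e. f e - m * path_indicator p e) s = outflow E f s - m"
      using peel_st_path[OF less.prems] by blast
    obtain \<mu> where \<mu>: "\<forall>q. 0 \<le> \<mu> q"
      "\<forall>e. f e - m * path_indicator p e = (\<Sum>q\<in>st_paths. \<mu> q * path_indicator q e)"
      "sum \<mu> st_paths = outflow E f s - m"
      using less.hyps[OF smaller g] val by auto
    define \<mu>' where "\<mu>' q = \<mu> q + (if q = p then m else 0)" for q
    have "\<mu>' q * path_indicator q e = \<mu> q * path_indicator q e + (if q = p then m * path_indicator p e else 0)"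
      for q e by (simp add: \<mu>'_def distrib_right)
    then have "(\<Sum>q\<in>st_paths. \<mu>' q * path_indicator q e) =
        (\<Sum>q\<in>st_paths. \<mu> q * path_indicator q e) + m * path_indicator p e" for e
      using p finite_st_paths by (simp add: sum.distrib)
    then have "(\<Sum>q\<in>st_paths. \<mu>' q * path_indicator q e) = f e" for e
      using spec[OF \<mu>(2), of e] by simp
    moreover have "sum \<mu>' st_paths = outflow E f s"
      using \<mu>(3) p finite_st_paths by (simp add: \<mu>'_def sum.distrib sum.delta)
    ultimately show ?thesis
      using \<mu>(1) \<open>0 < m\<close> by (intro exI[of _ \<mu>']) (auto simp: \<mu>'_def)
  qed
qed

text \<open>Scaling each path to the full flow value turns the decomposition into a convex one.\<close>
lemma convex_path_decomposition:
  assumes f: "nonneg_st_flow V E s t f"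
  obtains c where "\<forall>q\<in>st_paths. 0 \<le> c q" and "sum c st_paths = 1"
    and "\<forall>e. f e = (\<Sum>q\<in>st_paths. c q * (outflow E f s * path_indicator q e))"
proof (cases "outflow E f s = 0")
  case True
  obtain p0 where "p0 \<in> st_paths"
    using st_path_exists unfolding st_paths_def by blast
  then have "(\<Sum>q\<in>st_paths. if q = p0 then 1 else 0) = (1::real)"
    using finite_st_paths by simp
  moreover have "\<forall>e. f e = (\<Sum>q\<in>st_paths. (if q = p0 then 1 else 0) * (outflow E f s * path_indicator q e))"
    using flow_eq_0_if_outflow_source_eq_0[OF f True] True by simp
  ultimately show thesis
    by (intro that[of "\<lambda>q. if q = p0 then 1 else 0"]) auto
next
  case False
  obtain \<mu> where \<mu>: "\<forall>q. 0 \<le> \<mu> q" "\<forall>e. f e = (\<Sum>q\<in>st_paths. \<mu> q * path_indicator q e)"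
    "sum \<mu> st_paths = outflow E f s"
    using path_decomposition[OF f] by blast
  have v: "0 < outflow E f s"
    using False outflow_nonneg[of E f s] nonneg_st_flowD(2)[OF f] by force
  then have "(\<Sum>q\<in>st_paths. \<mu> q / outflow E f s) = 1"
    using \<mu>(3) by (simp add: sum_divide_distrib[symmetric])
  moreover have "\<forall>e. f e = (\<Sum>q\<in>st_paths. \<mu> q / outflow E f s * (outflow E f s * path_indicator q e))"
    using \<mu>(2) v by simp
  ultimately show thesis
    using \<mu>(1) v by (intro that[of "\<lambda>q. \<mu> q / outflow E f s"]) auto
qed

lemma scaled_path_flow_single_path:
  assumes q: "q \<in> st_paths" and v: "0 \<le> v" "v \<le> \<gamma>" and C: "\<forall>e\<in>E. \<gamma> \<le> C e"
  shows "(\<lambda>e. v * path_indicator q e) \<in> flows_le V E C s t \<gamma> \<inter> {f. single_path_flow V E C s t f}"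
proof -
  let ?g = "\<lambda>e. v * path_indicator q e"
  have qp: "is_st_path V E s t q" and qE: "path_edges q \<subseteq> E"
    using q by (auto simp: st_paths_def is_st_path_def is_dpath_def)
  have "is_st_flow V E C s t ?g"
    unfolding is_st_flow_def
  proof (intro conjI allI impI ballI)
    show "?g e = 0" if "e \<notin> E" for e
      using qE that by (auto simp: path_indicator_def)
    show "0 \<le> ?g e" "?g e \<le> C e" if "e \<in> E" for e
      using v C that by (auto simp: path_indicator_def)
    show "(\<Sum>e\<in>{e\<in>E. snd e = w}. ?g e) = (\<Sum>e\<in>{e\<in>E. fst e = w}. ?g e)" if "w \<in> V - {s, t}" for w
      using path_indicator_conserved[OF finite_E qp, of w] that
      by (simp add: inflow_def outflow_def sum_distrib_left[symmetric])
  qed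
  moreover have "flow_val E s ?g = v"
    using outflow_path_indicator_source[OF finite_E qp s_ne_t]
    by (simp add: flow_val_eq_outflow outflow_def sum_distrib_left[symmetric])
  moreover have "\<forall>e. 0 < ?g e \<longrightarrow> e \<in> path_edges q"
    by (simp add: path_indicator_def)
  ultimately show ?thesis
    using qp v unfolding flows_le_def single_path_flow_def by auto
qed

lemma Lambda_flow_le_single_path_mixture:
  assumes C: "\<forall>e\<in>E. \<gamma> \<le> C e" and f: "f \<in> flows_le V E C s t \<gamma>"
  obtains c where "\<forall>q\<in>st_paths. 0 \<le> c q" and "sum c st_paths = 1"
    and "\<And>k p lam. user_paths V E C k p lam \<Longrightarrow> Lambda_flow E C k p lam f \<le>
      (\<Sum>q\<in>st_paths. c q * Lambda_flow E C k p lam (\<lambda>e. flow_val E s f * path_indicator q e))"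
proof -
  have "nonneg_st_flow V E s t f"
    using f is_st_flow_imp_nonneg_st_flow by (auto simp: flows_le_def)
  then obtain c where c0: "\<forall>q\<in>st_paths. 0 \<le> c q" and c1: "sum c st_paths = 1"
    and combination: "\<forall>e. f e = (\<Sum>q\<in>st_paths. c q * (flow_val E s f * path_indicator q e))"
    unfolding flow_val_eq_outflow by (rule convex_path_decomposition)
  have "0 \<le> flow_val E s f" "flow_val E s f \<le> \<gamma>"
    using f by (rule flow_val_flows_le)+
  then have "\<forall>q\<in>st_paths. \<forall>e\<in>E. flow_val E s f * path_indicator q e \<le> C e"
    using C by (auto simp: path_indicator_def)
  moreover have "\<forall>e\<in>E. f e \<le> (\<Sum>q\<in>st_paths. c q * (flow_val E s f * path_indicator q e))"
  proof
    fix e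
    show "f e \<le> (\<Sum>q\<in>st_paths. c q * (flow_val E s f * path_indicator q e))"
      using spec[OF combination, of e] by simp
  qed
  ultimately have Lambda: "Lambda_flow E C k p lam f \<le>
      (\<Sum>q\<in>st_paths. c q * Lambda_flow E C k p lam (\<lambda>e. flow_val E s f * path_indicator q e))"
    if "user_paths V E C k p lam" for k p lam
    using that by (intro Lambda_flow_convex[OF finite_st_paths c0 c1]) (auto simp: user_paths_def)
  show thesis
    using c0 c1 Lambda by (rule that)
qed

end

theorem proposition1:
  fixes V :: "'v set" and E :: "'v edge set" and C :: "'v edge \<Rightarrow> real"
    and s t :: 'v and \<gamma> :: real and w :: "'v flowvec \<Rightarrow> real"
  assumes "simple_dag V E"
    and "\<forall>e\<in>E. 0 \<le> C e"
    and "s \<in> V" and "t \<in> V" and "s \<noteq> t"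
    and "\<exists>p. is_st_path V E s t p"
    and "0 < \<gamma>" and "\<forall>e\<in>E. \<gamma> \<le> C e"
    and "interdiction_strategy V E C s t \<gamma> w"
  shows "\<exists>w'. fin_distr_on w' (flows_le V E C s t \<gamma> \<inter> {f. single_path_flow V E C s t f}) \<and>
    (\<forall>k p lam. user_paths V E C k p lam \<longrightarrow>
       Lambda_strat E C k p lam w' \<ge> Lambda_strat E C k p lam w)"
proof -
  interpret st_dag V E s t
    using assms(1,5,6) by unfold_locales
  let ?F = "flows_le V E C s t \<gamma>"
  let ?S = "?F \<inter> {f. single_path_flow V E C s t f}"
  define G where "G f q e = flow_val E s f * path_indicator q e"
    for f :: "'v flowvec" and q :: "'v list" and e :: "'v edge"
  have "\<forall>f\<in>?F. \<exists>c. (\<forall>q\<in>st_paths. 0 \<le> c q) \<and> sum c st_paths = 1 \<and>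
      (\<forall>k p lam. user_paths V E C k p lam \<longrightarrow>
        Lambda_flow E C k p lam f \<le> (\<Sum>q\<in>st_paths. c q * Lambda_flow E C k p lam (G f q)))"
    unfolding G_def using Lambda_flow_le_single_path_mixture[OF assms(8)] by (metis (no_types))
  then obtain c where c: "\<forall>f\<in>?F. (\<forall>q\<in>st_paths. 0 \<le> c f q) \<and> sum (c f) st_paths = 1 \<and>
      (\<forall>k p lam. user_paths V E C k p lam \<longrightarrow>
        Lambda_flow E C k p lam f \<le> (\<Sum>q\<in>st_paths. c f q * Lambda_flow E C k p lam (G f q)))"
    by (rule bchoice[THEN exE])
  have "G f q \<in> ?S" if "f \<in> ?F" "q \<in> st_paths" for f q
    unfolding G_def using that flow_val_flows_le[OF that(1)] assms(8)
    by (intro scaled_path_flow_single_path) auto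
  then obtain d where d: "fin_distr_on d ?S"
    and mix: "\<And>h. (\<Sum>g\<in>{g. d g \<noteq> 0}. d g * h g) =
      (\<Sum>f\<in>{f. w f \<noteq> 0}. w f * (\<Sum>q\<in>st_paths. c f q * h (G f q)))"
    using fin_distr_on_mixture[OF assms(9)[unfolded interdiction_strategy_def] finite_st_paths, of c G]
      c by blast
  have "Lambda_strat E C k p lam w \<le> Lambda_strat E C k p lam d" if "user_paths V E C k p lam" for k p lam
    using assms(9) c that unfolding Lambda_strat_def mix interdiction_strategy_def fin_distr_on_def
    by (intro sum_mono mult_left_mono) auto
  with d show ?thesis
    by blast
qed

end
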